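(* Let $\phi\in\mathrm{Aut}_0(H)$. Then $\phi(H(m))\subseteq\sum_{i=0}^mH(i)$ for all $m\geq0$.
   Context: Let $k$ be a field and $0\neq q\in k$ not a root of unity. $H=k_q[x,x^{-1},y]$ is the $k$-algebra generated by $x,x^{-1},y$ with $xx^{-1}=x^{-1}x=1$, $yx=qxy$, a Hopf algebra with $\Delta(x)=x\otimes x$, $\Delta(x^{-1})=x^{-1}\otimes x^{-1}$, $\Delta(y)=y\otimes x+1\otimes y$, $\varepsilon(x)=1$, $\varepsilon(y)=0$; $\{x^ny^m:n\in\mathbb{Z},m\in\mathbb{N}\}$ is a $k$-basis. $H_0=\mathrm{span}\{x^n:n\in\mathbb{Z}\}$ and $H(m)=H_0y^m$. $\mathrm{Aut}_0(H)$ is the group of coalgebra automorphisms $\phi$ of $H$ with $\phi(1)=1$. *)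

theory Defs
  imports Main
begin

(* Elements of H = k_q[x,x^-1,y] are finitely supported coefficient functions
   on the basis x^n y^m, indexed by (n,m) :: int \<times> nat.
   Elements of H \<otimes> H are finitely supported functions on pairs of basis indices
   (basis x^a y^b \<otimes> x^c y^d  <->  ((a,b),(c,d))). *)

definition supp :: "('a \<Rightarrow> 'k::zero) \<Rightarrow> 'a set" where
  "supp f = {a. f a \<noteq> 0}"

definition Hsp :: "(int \<times> nat \<Rightarrow> 'k::field) set" where
  "Hsp = {f. finite (supp f)}"

definition Tsp :: "((int \<times> nat) \<times> (int \<times> nat) \<Rightarrow> 'k::field) set" where
  "Tsp = {t. finite (supp t)}"

definition bas :: "'a \<Rightarrow> 'a \<Rightarrow> 'k::field" where
  "bas a = (\<lambda>b. if b = a then 1 else 0)"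

definition addI :: "int \<times> nat \<Rightarrow> int \<times> nat \<Rightarrow> int \<times> nat" where
  "addI a b = (fst a + fst b, snd a + snd b)"

(* (x^a1 y^a2)(x^b1 y^b2) = q^(a2*b1) x^(a1+b1) y^(a2+b2), from y x = q x y *)
definition tw :: "'k::field \<Rightarrow> int \<times> nat \<Rightarrow> int \<times> nat \<Rightarrow> 'k" where
  "tw q a b = q powi (int (snd a) * fst b)"

definition mulH :: "'k::field \<Rightarrow> (int \<times> nat \<Rightarrow> 'k) \<Rightarrow> (int \<times> nat \<Rightarrow> 'k) \<Rightarrow> (int \<times> nat \<Rightarrow> 'k)" where
  "mulH q f g = (\<lambda>c. \<Sum>a\<in>supp f. \<Sum>b\<in>supp g.
       if addI a b = c then f a * g b * tw q a b else 0)"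

definition mulT :: "'k::field \<Rightarrow> ((int \<times> nat) \<times> (int \<times> nat) \<Rightarrow> 'k)
     \<Rightarrow> ((int \<times> nat) \<times> (int \<times> nat) \<Rightarrow> 'k) \<Rightarrow> ((int \<times> nat) \<times> (int \<times> nat) \<Rightarrow> 'k)" where
  "mulT q s t = (\<lambda>c. \<Sum>p\<in>supp s. \<Sum>p'\<in>supp t.
       if addI (fst p) (fst p') = fst c \<and> addI (snd p) (snd p') = snd c
       then s p * t p' * tw q (fst p) (fst p') * tw q (snd p) (snd p') else 0)"

definition unitT :: "(int \<times> nat) \<times> (int \<times> nat) \<Rightarrow> 'k::field" where
  "unitT = bas ((0,0),(0,0))"

definition powT :: "'k::field \<Rightarrow> ((int \<times> nat) \<times> (int \<times> nat) \<Rightarrow> 'k) \<Rightarrow> nat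
     \<Rightarrow> ((int \<times> nat) \<times> (int \<times> nat) \<Rightarrow> 'k)" where
  "powT q t n = ((mulT q t) ^^ n) unitT"

(* \<Delta>(x) = x \<otimes> x, \<Delta>(x^-1) = x^-1 \<otimes> x^-1, \<Delta>(y) = y \<otimes> x + 1 \<otimes> y *)
definition DeltaX :: "(int \<times> nat) \<times> (int \<times> nat) \<Rightarrow> 'k::field" where
  "DeltaX = bas ((1,0),(1,0))"
definition DeltaXinv :: "(int \<times> nat) \<times> (int \<times> nat) \<Rightarrow> 'k::field" where
  "DeltaXinv = bas ((-1,0),(-1,0))"
definition DeltaY :: "(int \<times> nat) \<times> (int \<times> nat) \<Rightarrow> 'k::field" where
  "DeltaY = (\<lambda>p. bas ((0,1),(1,0)) p + bas ((0,0),(0,1)) p)"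

(* \<Delta>(x^n y^m) = \<Delta>(x)^n \<Delta>(y)^m, \<Delta> being an algebra map *)
definition DeltaB :: "'k::field \<Rightarrow> int \<times> nat \<Rightarrow> ((int \<times> nat) \<times> (int \<times> nat) \<Rightarrow> 'k)" where
  "DeltaB q a = mulT q
     (if fst a \<ge> 0 then powT q DeltaX (nat (fst a)) else powT q DeltaXinv (nat (- fst a)))
     (powT q DeltaY (snd a))"

definition Delta :: "'k::field \<Rightarrow> (int \<times> nat \<Rightarrow> 'k) \<Rightarrow> ((int \<times> nat) \<times> (int \<times> nat) \<Rightarrow> 'k)" where
  "Delta q f = (\<lambda>p. \<Sum>a\<in>supp f. f a * DeltaB q a p)"

definition epsH :: "(int \<times> nat \<Rightarrow> 'k::field) \<Rightarrow> 'k" where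
  "epsH f = (\<Sum>a\<in>supp f. if snd a = 0 then f a else 0)"

definition tmap :: "((int \<times> nat \<Rightarrow> 'k) \<Rightarrow> (int \<times> nat \<Rightarrow> 'k))
     \<Rightarrow> ((int \<times> nat) \<times> (int \<times> nat) \<Rightarrow> 'k::field) \<Rightarrow> ((int \<times> nat) \<times> (int \<times> nat) \<Rightarrow> 'k)" where
  "tmap \<phi> t = (\<lambda>c. \<Sum>p\<in>supp t. t p * \<phi> (bas (fst p)) (fst c) * \<phi> (bas (snd p)) (snd c))"

definition k_linear_on :: "((int \<times> nat \<Rightarrow> 'k) \<Rightarrow> (int \<times> nat \<Rightarrow> 'k::field)) \<Rightarrow> bool" where
  "k_linear_on \<phi> \<longleftrightarrow>
     (\<forall>f\<in>Hsp. \<forall>g\<in>Hsp. \<phi> (\<lambda>a. f a + g a) = (\<lambda>a. \<phi> f a + \<phi> g a)) \<and>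
     (\<forall>f\<in>Hsp. \<forall>c. \<phi> (\<lambda>a. c * f a) = (\<lambda>a. c * \<phi> f a))"

definition Aut0 :: "'k::field \<Rightarrow> ((int \<times> nat \<Rightarrow> 'k) \<Rightarrow> (int \<times> nat \<Rightarrow> 'k)) set" where
  "Aut0 q = {\<phi>. k_linear_on \<phi> \<and> bij_betw \<phi> Hsp Hsp \<and>
      (\<forall>f\<in>Hsp. Delta q (\<phi> f) = tmap \<phi> (Delta q f)) \<and>
      (\<forall>f\<in>Hsp. epsH (\<phi> f) = epsH f) \<and>
      \<phi> (bas (0,0)) = bas (0,0)}"

definition Hdeg :: "nat \<Rightarrow> (int \<times> nat \<Rightarrow> 'k::field) set" where
  "Hdeg m = {f\<in>Hsp. \<forall>a\<in>supp f. snd a = m}"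

definition Hle :: "nat \<Rightarrow> (int \<times> nat \<Rightarrow> 'k::field) set" where
  "Hle m = {f\<in>Hsp. \<forall>a\<in>supp f. snd a \<le> m}"

end

theory Submission
  imports Defs
begin

text \<open>
  Since \<open>\<Delta>(x^n y^d) = (x^n \<otimes> x^n) (y \<otimes> x + 1 \<otimes> y)^d\<close>, every basis tensor
  \<open>x^a y^i \<otimes> x^b y^j\<close> occurring in it has \<open>a = n\<close> and \<open>i + j = d\<close>, so each coefficient of
  \<open>\<Delta>h\<close> comes from a single coefficient of \<open>h\<close>. In particular, if \<open>x^n y^(k+1)\<close> occurs in
  \<open>h\<close>, then \<open>x^n y \<otimes> x^(n+1) y^k\<close> occurs in \<open>\<Delta>h\<close> with the extra factor
  \<open>1 + q + \<dots> + q^k\<close>, which is nonzero as \<open>q\<close> is not a root of unity. Hence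
  \<open>\<Delta>h \<in> H(0) \<otimes> H + H \<otimes> (H(0) + \<dots> + H(m-1))\<close> forces \<open>h \<in> H(0) + \<dots> + H(m)\<close>, and a
  grouplike element lies in \<open>H(0)\<close>. By induction on \<open>m\<close>: \<open>\<phi>(x^n)\<close> is grouplike, and for
  \<open>m > 0\<close> the induction hypothesis puts \<open>\<Delta>\<phi>(x^n y^m) = (\<phi> \<otimes> \<phi>) \<Delta>(x^n y^m)\<close> into that subspace.
\<close>

definition addT :: "(int \<times> nat) \<times> (int \<times> nat) \<Rightarrow> (int \<times> nat) \<times> (int \<times> nat) \<Rightarrow> (int \<times> nat) \<times> (int \<times> nat)" where
  "addT p p' = (addI (fst p) (fst p'), addI (snd p) (snd p'))"

definition ydegT :: "(int \<times> nat) \<times> (int \<times> nat) \<Rightarrow> nat" where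
  "ydegT p = snd (fst p) + snd (snd p)"

lemma fst_fst_addT [simp]: "fst (fst (addT p p')) = fst (fst p) + fst (fst p')"
  by (simp add: addT_def addI_def)

lemma ydegT_addT [simp]: "ydegT (addT p p') = ydegT p + ydegT p'"
  by (simp add: addT_def addI_def ydegT_def)

lemma supp_bas [simp]: "supp (bas a :: 'a \<Rightarrow> 'k::field) = {a}"
  by (auto simp: supp_def bas_def)

lemma bas_self [simp]: "bas a a = 1"
  by (simp add: bas_def)

lemma tw_snd_0 [simp]: "tw q (n, 0) b = 1"
  by (simp add: tw_def)

lemma tw_fst_0 [simp]: "tw q a (0, m) = 1"
  by (simp add: tw_def)

lemma bas_in_Hsp: "(bas a :: int \<times> nat \<Rightarrow> 'k::field) \<in> Hsp"
  by (simp add: Hsp_def)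

lemma supp_mulT: "supp (mulT q s t) \<subseteq> (\<lambda>(p, p'). addT p p') ` (supp s \<times> supp t)"
proof
  fix c assume "c \<in> supp (mulT q s t)"
  then obtain p p' where "p \<in> supp s" "p' \<in> supp t"
    "addI (fst p) (fst p') = fst c \<and> addI (snd p) (snd p') = snd c"
    unfolding mulT_def supp_def
    by (auto elim!: sum.not_neutral_contains_not_neutral split: if_splits)
  then show "c \<in> (\<lambda>(p, p'). addT p p') ` (supp s \<times> supp t)"
    by (force simp: addT_def)
qed

lemma mulT_bas_addT:
  assumes "finite (supp t)"
  shows "mulT q (bas p) t (addT p p') = t p' * tw q (fst p) (fst p') * tw q (snd p) (snd p')"
proof -
  have addT_cancel: "(addI (fst p) (fst p'') = fst (addT p p') \<and> addI (snd p) (snd p'') = snd (addT p p'))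
      \<longleftrightarrow> p'' = p'" for p''
    by (auto simp: addT_def addI_def prod_eq_iff)
  have "mulT q (bas p) t (addT p p') =
      (\<Sum>p''\<in>supp t. if p'' = p' then t p'' * tw q (fst p) (fst p'') * tw q (snd p) (snd p'') else 0)"
    unfolding mulT_def supp_bas sum.insert_if by (simp add: addT_cancel cong: if_cong)
  also have "\<dots> = (if p' \<in> supp t then t p' * tw q (fst p) (fst p') * tw q (snd p) (snd p') else 0)"
    using assms by (simp add: sum.delta)
  also have "\<dots> = t p' * tw q (fst p) (fst p') * tw q (snd p) (snd p')"
    by (simp add: supp_def)
  finally show ?thesis .
qed

lemma mulT_bas_eq_0:
  assumes "\<forall>p'\<in>supp t. c \<noteq> addT p p'"
  shows "mulT q (bas p) t c = 0"
proof (rule ccontr)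
  assume "mulT q (bas p) t c \<noteq> 0"
  then have "c \<in> supp (mulT q (bas p) t)"
    by (simp add: supp_def)
  then obtain p' where "p' \<in> supp t" "c = addT p p'"
    using supp_mulT[of q "bas p" t] by auto
  with assms show False
    by blast
qed

lemma mulT_bas_bas:
  "mulT q (bas p) (bas p') = (\<lambda>c. if c = addT p p' then tw q (fst p) (fst p') * tw q (snd p) (snd p') else 0)"
proof
  fix c show "mulT q (bas p) (bas p') c = (if c = addT p p' then tw q (fst p) (fst p') * tw q (snd p) (snd p') else 0)"
    by (cases "c = addT p p'") (simp_all add: mulT_bas_addT mulT_bas_eq_0)
qed

lemma powT_0: "powT q t 0 = bas ((0, 0), (0, 0))"
  by (simp add: powT_def unitT_def)

lemma powT_Suc: "powT q t (Suc k) = mulT q t (powT q t k)"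
  by (simp add: powT_def)

subsection \<open>The comultiplication on the basis\<close>

lemma powT_DeltaX: "powT q DeltaX k = bas ((int k, 0), (int k, 0))"
proof (induction k)
  case 0 then show ?case by (simp add: powT_0)
next
  case (Suc k) then show ?case
    by (simp add: powT_Suc DeltaX_def mulT_bas_bas addT_def addI_def cong: if_cong)
      (simp add: bas_def)
qed

lemma powT_DeltaXinv: "powT q DeltaXinv k = bas ((- int k, 0), (- int k, 0))"
proof (induction k)
  case 0 then show ?case by (simp add: powT_0)
next
  case (Suc k) then show ?case
    by (simp add: powT_Suc DeltaXinv_def mulT_bas_bas addT_def addI_def cong: if_cong)
      (simp add: bas_def)
qed

lemma Delta_bas: "Delta q (bas a) = DeltaB q a"
  by (simp add: Delta_def fun_eq_iff)

lemma DeltaB_eq: "DeltaB q a = mulT q (bas ((fst a, 0), (fst a, 0))) (powT q DeltaY (snd a))"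
  by (simp add: DeltaB_def powT_DeltaX powT_DeltaXinv)

lemma DeltaB_0: "DeltaB q (n, 0) = bas ((n, 0), (n, 0))"
  by (simp add: DeltaB_eq powT_0 mulT_bas_bas addT_def addI_def cong: if_cong)
      (simp add: bas_def)

lemma supp_DeltaY: "supp (DeltaY :: _ \<Rightarrow> 'k::field) = {((0, 1), (1, 0)), ((0, 0), (0, 1))}"
  by (auto simp: DeltaY_def supp_def bas_def)

lemma mulT_DeltaY:
  "mulT q DeltaY t c = mulT q (bas ((0, 1), (1, 0))) t c + mulT q (bas ((0, 0), (0, 1))) t c"
  unfolding mulT_def supp_DeltaY supp_bas by (simp add: DeltaY_def bas_def cong: if_cong)

lemma supp_powT_DeltaY:
  fixes q :: "'k::field"
  shows "finite (supp (powT q DeltaY k)) \<and> (\<forall>c\<in>supp (powT q DeltaY k). fst (fst c) = 0 \<and> ydegT c = k)"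
proof (induction k)
  case 0 show ?case by (simp add: powT_0 ydegT_def)
next
  case (Suc k)
  let ?S = "(\<lambda>(p, p'). addT p p') ` (supp (DeltaY :: _ \<Rightarrow> 'k) \<times> supp (powT q DeltaY k))"
  have sub: "supp (powT q DeltaY (Suc k)) \<subseteq> ?S"
    using supp_mulT[of q DeltaY "powT q DeltaY k"] by (simp add: powT_Suc)
  have "finite ?S"
    using Suc by (simp add: supp_DeltaY)
  moreover have "fst (fst c) = 0 \<and> ydegT c = Suc k" if "c \<in> ?S" for c
    using that Suc by (auto simp: supp_DeltaY) (simp_all add: ydegT_def)
  ultimately show ?case
    using sub by (meson finite_subset subsetD)
qed

lemma finite_supp_powT_DeltaY: "finite (supp (powT q DeltaY k))"
  using supp_powT_DeltaY by blast

lemma powT_DeltaY_top: "powT q DeltaY k ((0, 0), (0, k)) = 1"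
proof (induction k)
  case 0 show ?case by (simp add: powT_0)
next
  case (Suc k)
  have "mulT q (bas ((0, 1), (1, 0))) (powT q DeltaY k) ((0, 0), (0, Suc k)) = 0"
    by (rule mulT_bas_eq_0) (auto simp: addT_def addI_def)
  moreover have "((0, 0), (0, Suc k)) = addT ((0, 0), (0, 1)) ((0, 0), (0, k))"
    by (simp add: addT_def addI_def)
  ultimately show ?case
    by (simp add: powT_Suc mulT_DeltaY mulT_bas_addT finite_supp_powT_DeltaY Suc del: One_nat_def)
qed

lemma powT_DeltaY_y_coeff: "powT q DeltaY (Suc k) ((0, 1), (1, k)) = (\<Sum>i\<le>k. q ^ i)"
proof (induction k)
  case 0
  show ?case
    by (simp add: powT_Suc powT_0 mulT_DeltaY mulT_bas_bas addT_def addI_def)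
next
  case (Suc k)
  have fin: "finite (supp (powT q DeltaY (Suc k)))"
    by (rule finite_supp_powT_DeltaY)
  have "addT ((0, 1), (1, 0)) ((0, 0), (0, Suc k)) = ((0, 1), (1, Suc k))"
    and "addT ((0, 0), (0, 1)) ((0, 1), (1, k)) = ((0, 1), (1, Suc k))"
    by (simp_all add: addT_def addI_def)
  then have "mulT q (bas ((0, 1), (1, 0))) (powT q DeltaY (Suc k)) ((0, 1), (1, Suc k)) = 1"
    and "mulT q (bas ((0, 0), (0, 1))) (powT q DeltaY (Suc k)) ((0, 1), (1, Suc k))
      = q * (\<Sum>i\<le>k. q ^ i)"
    using mulT_bas_addT[OF fin, of q "((0, 1), (1, 0))" "((0, 0), (0, Suc k))"]
      mulT_bas_addT[OF fin, of q "((0, 0), (0, 1))" "((0, 1), (1, k))"]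
    by (simp_all add: powT_DeltaY_top Suc tw_def del: One_nat_def)
  then have "powT q DeltaY (Suc (Suc k)) ((0, 1), (1, Suc k)) = 1 + q * (\<Sum>i\<le>k. q ^ i)"
    by (simp add: powT_Suc[of q DeltaY "Suc k"] mulT_DeltaY)
  also have "\<dots> = (\<Sum>i\<le>Suc k. q ^ i)"
    by (subst sum.atMost_Suc_shift) (simp add: sum_distrib_left)
  finally show ?case .
qed

lemma DeltaB_neq_0_imp:
  assumes "DeltaB q a p \<noteq> 0"
  shows "ydegT p = snd a \<and> fst (fst p) = fst a"
proof -
  have "p \<in> supp (mulT q (bas ((fst a, 0), (fst a, 0))) (powT q DeltaY (snd a)))"
    using assms by (simp add: DeltaB_eq supp_def)
  then obtain p' where "p' \<in> supp (powT q DeltaY (snd a))" "p = addT ((fst a, 0), (fst a, 0)) p'"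
    using supp_mulT[of q "bas ((fst a, 0), (fst a, 0))" "powT q DeltaY (snd a)"] by auto
  then show ?thesis
    using supp_powT_DeltaY[of q "snd a"] by simp (simp add: ydegT_def)
qed

lemma DeltaB_y_coeff: "DeltaB q (n, Suc k) ((n, 1), (n + 1, k)) = (\<Sum>i\<le>k. q ^ i)"
proof -
  have "((n, 1), (n + 1, k)) = addT ((n, 0), (n, 0)) ((0, 1), (1, k))"
    by (simp add: addT_def addI_def)
  then show ?thesis
    by (simp add: DeltaB_eq mulT_bas_addT finite_supp_powT_DeltaY powT_DeltaY_y_coeff del: One_nat_def)
qed

lemma Delta_apply:
  assumes "finite (supp h)"
  shows "Delta q h c = h (fst (fst c), ydegT c) * DeltaB q (fst (fst c), ydegT c) c"
proof -
  let ?a = "(fst (fst c), ydegT c)"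
  have term_eq: "h a * DeltaB q a c = (if a = ?a then h ?a * DeltaB q ?a c else 0)" for a
  proof (cases "DeltaB q a c = 0")
    case False
    then have "a = ?a"
      using DeltaB_neq_0_imp[of q a c] by (metis prod.collapse)
    then show ?thesis by simp
  qed auto
  have "Delta q h c = (\<Sum>a\<in>supp h. if a = ?a then h ?a * DeltaB q ?a c else 0)"
    unfolding Delta_def by (rule sum.cong[OF refl term_eq])
  also have "\<dots> = (if ?a \<in> supp h then h ?a * DeltaB q ?a c else 0)"
    using assms by (simp add: sum.delta')
  also have "\<dots> = h ?a * DeltaB q ?a c"
    by (simp add: supp_def)
  finally show ?thesis .
qed

subsection \<open>Detecting the filtration through \<open>\<Delta>\<close>\<close>

lemma sum_powers_neq_0:
  fixes q :: "'k::field"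
  assumes "\<forall>n::nat. n > 0 \<longrightarrow> q ^ n \<noteq> 1"
  shows "(\<Sum>i\<le>k. q ^ i) \<noteq> 0"
  using sum_gp_basic[of q k] assms by force

text \<open>\<open>Tlow m t\<close> says \<open>t \<in> H(0) \<otimes> H + H \<otimes> (H(0) + \<dots> + H(m-1))\<close>.\<close>

definition Tlow :: "nat \<Rightarrow> ((int \<times> nat) \<times> (int \<times> nat) \<Rightarrow> 'k::zero) \<Rightarrow> bool" where
  "Tlow m t \<longleftrightarrow> (\<forall>p\<in>supp t. snd (fst p) = 0 \<or> snd (snd p) < m)"

lemma Hle_if_Delta_Tlow:
  fixes q :: "'k::field"
  assumes h: "h \<in> Hsp" and low: "Tlow m (Delta q h)"
    and no_root: "\<forall>n::nat. n > 0 \<longrightarrow> q ^ n \<noteq> 1"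
  shows "h \<in> Hle m"
proof -
  have "snd a \<le> m" if a: "a \<in> supp h" for a
  proof (rule ccontr)
    assume "\<not> snd a \<le> m"
    obtain n d where "a = (n, d)"
      by (cases a)
    with \<open>\<not> snd a \<le> m\<close> obtain k where a_eq: "a = (n, Suc k)" and "m \<le> k"
      by (cases d) auto
    let ?c = "((n, 1), (n + 1, k))"
    have "ydegT ?c = Suc k"
      by (simp add: ydegT_def)
    then have "Delta q h ?c = h a * (\<Sum>i\<le>k. q ^ i)"
      using Delta_apply[of h q ?c] h DeltaB_y_coeff[of q n k]
      by (simp add: Hsp_def a_eq del: One_nat_def)
    then have "?c \<in> supp (Delta q h)"
      using a sum_powers_neq_0[OF no_root] by (simp add: supp_def)
    with low \<open>m \<le> k\<close> show False
      by (auto simp: Tlow_def)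
  qed
  with h show ?thesis
    by (simp add: Hle_def)
qed

lemma grouplike_in_Hle_0:
  assumes g: "g \<in> Hsp" and grouplike: "\<forall>c. Delta q g c = g (fst c) * g (snd c)"
  shows "g \<in> Hle 0"
proof (rule ccontr)
  assume "g \<notin> Hle 0"
  then obtain b where b: "b \<in> supp g" "snd b > 0"
    using g by (auto simp: Hle_def)
  have fin: "finite (supp g)"
    using g by (simp add: Hsp_def)
  define M where "M = Max (snd ` supp g)"
  have M_max: "snd a \<le> M" if "a \<in> supp g" for a
    using fin that by (simp add: M_def)
  have "M \<in> snd ` supp g"
    unfolding M_def using fin b(1) by (intro Max_in) auto
  then obtain a where a: "a \<in> supp g" "snd a = M"
    by blast
  have "M > 0"
    using M_max[OF b(1)] b(2) by simp
  then have "(fst a, M + M) \<notin> supp g"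
    using M_max by fastforce
  then have "Delta q g (a, a) = 0"
    using Delta_apply[OF fin, of q "(a, a)"] a(2) by (simp add: ydegT_def supp_def)
  moreover have "g a * g a \<noteq> 0"
    using a(1) by (simp add: supp_def)
  ultimately show False
    using grouplike by simp
qed

lemma Tlow_tmap:
  assumes deg: "\<forall>p\<in>supp t. ydegT p = m" and "m > 0"
    and below: "\<forall>a. snd a < m \<longrightarrow> \<phi> (bas a) \<in> Hle (snd a)"
  shows "Tlow m (tmap \<phi> t)"
  unfolding Tlow_def
proof
  fix c assume "c \<in> supp (tmap \<phi> t)"
  then obtain p where p: "p \<in> supp t" "t p * \<phi> (bas (fst p)) (fst c) * \<phi> (bas (snd p)) (snd c) \<noteq> 0"
    unfolding tmap_def supp_def by (auto elim: sum.not_neutral_contains_not_neutral)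
  then have c: "fst c \<in> supp (\<phi> (bas (fst p)))" "snd c \<in> supp (\<phi> (bas (snd p)))"
    by (auto simp: supp_def)
  show "snd (fst c) = 0 \<or> snd (snd c) < m"
  proof (cases "snd (fst p) = 0")
    case True
    then have "\<phi> (bas (fst p)) \<in> Hle 0"
      using below \<open>m > 0\<close> by metis
    then show ?thesis
      using c(1) by (simp add: Hle_def)
  next
    case False
    then have "snd (snd p) < m"
      using deg p(1) by (auto simp: ydegT_def)
    moreover have "\<phi> (bas (snd p)) \<in> Hle (snd (snd p))"
      using below calculation by blast
    ultimately show ?thesis
      using c(2) by (fastforce simp: Hle_def)
  qed
qed

lemma Hsp_add: "f \<in> Hsp \<Longrightarrow> g \<in> Hsp \<Longrightarrow> (\<lambda>a. f a + g a) \<in> Hsp"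
  unfolding Hsp_def by (auto intro: finite_subset[of _ "supp f \<union> supp g"] simp: supp_def)

lemma Hsp_sum: "finite A \<Longrightarrow> (\<And>i. i \<in> A \<Longrightarrow> g i \<in> Hsp) \<Longrightarrow> (\<lambda>x. \<Sum>i\<in>A. g i x) \<in> Hsp"
proof (induction A rule: finite_induct)
  case empty show ?case by (simp add: Hsp_def supp_def)
next
  case (insert i A) then show ?case by (simp add: Hsp_add)
qed

lemma k_linear_onD:
  assumes "k_linear_on \<phi>" and "f \<in> Hsp"
  shows k_linear_on_add: "g \<in> Hsp \<Longrightarrow> \<phi> (\<lambda>a. f a + g a) = (\<lambda>a. \<phi> f a + \<phi> g a)"
    and k_linear_on_smult: "\<phi> (\<lambda>a. c * f a) = (\<lambda>a. c * \<phi> f a)"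
  using assms unfolding k_linear_on_def by blast+

lemma k_linear_on_sum:
  assumes lin: "k_linear_on \<phi>" and "finite A" and "\<And>i. i \<in> A \<Longrightarrow> g i \<in> Hsp"
  shows "\<phi> (\<lambda>x. \<Sum>i\<in>A. g i x) = (\<lambda>x. \<Sum>i\<in>A. \<phi> (g i) x)"
  using \<open>finite A\<close> \<open>\<And>i. i \<in> A \<Longrightarrow> g i \<in> Hsp\<close>
proof (induction A rule: finite_induct)
  case empty
  have "(\<lambda>x. 0) \<in> Hsp"
    by (simp add: Hsp_def supp_def)
  from k_linear_on_smult[OF lin this, of 0] show ?case
    by simp
next
  case (insert i A)
  then have "g i \<in> Hsp" and "(\<lambda>x. \<Sum>j\<in>A. g j x) \<in> Hsp"
    by (simp_all add: Hsp_sum)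
  from k_linear_on_add[OF lin this] insert show ?case
    by simp
qed

lemma k_linear_on_expand:
  assumes lin: "k_linear_on \<phi>" and f: "f \<in> Hsp"
  shows "\<phi> f = (\<lambda>x. \<Sum>a\<in>supp f. f a * \<phi> (bas a) x)"
proof -
  have fin: "finite (supp f)"
    using f by (simp add: Hsp_def)
  have "f = (\<lambda>x. \<Sum>a\<in>supp f. f a * bas a x)"
  proof
    fix x
    have "(\<Sum>a\<in>supp f. f a * bas a x) = (\<Sum>a\<in>supp f. if x = a then f a else 0)"
      by (rule sum.cong) (simp_all add: bas_def)
    also have "\<dots> = f x"
      using fin by (simp add: supp_def)
    finally show "f x = (\<Sum>a\<in>supp f. f a * bas a x)" by simp
  qed
  then have "\<phi> f = \<phi> (\<lambda>x. \<Sum>a\<in>supp f. f a * bas a x)"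
    by (rule arg_cong)
  also have "\<dots> = (\<lambda>x. \<Sum>a\<in>supp f. \<phi> (\<lambda>y. f a * bas a y) x)"
  proof (rule k_linear_on_sum[OF lin fin])
    show "(\<lambda>y. f a * bas a y) \<in> Hsp" for a
      using finite_subset[of "supp (\<lambda>y. f a * bas a y)" "{a}"] by (simp add: Hsp_def supp_def bas_def)
  qed
  also have "\<dots> = (\<lambda>x. \<Sum>a\<in>supp f. f a * \<phi> (bas a) x)"
    by (simp add: k_linear_on_smult[OF lin bas_in_Hsp])
  finally show ?thesis .
qed

lemma k_linear_on_image_Hdeg:
  assumes lin: "k_linear_on \<phi>" and into_Hsp: "\<And>f. f \<in> Hsp \<Longrightarrow> \<phi> f \<in> Hsp"
    and bas: "\<And>a. snd a = m \<Longrightarrow> \<phi> (bas a) \<in> Hle m"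
  shows "\<phi> ` Hdeg m \<subseteq> Hle m"
proof
  fix g assume "g \<in> \<phi> ` Hdeg m"
  then obtain h where h: "h \<in> Hsp" "\<forall>a\<in>supp h. snd a = m" and g: "g = \<phi> h"
    by (auto simp: Hdeg_def)
  have "snd x \<le> m" if "x \<in> supp g" for x
  proof -
    from that obtain a where a: "a \<in> supp h" "\<phi> (bas a) x \<noteq> 0"
      unfolding g k_linear_on_expand[OF lin h(1)] supp_def
      by (auto elim: sum.not_neutral_contains_not_neutral)
    then have "\<phi> (bas a) \<in> Hle m" and "x \<in> supp (\<phi> (bas a))"
      using bas[of a] h(2) by (simp_all add: supp_def)
    then show ?thesis
      by (simp add: Hle_def)
  qed
  with into_Hsp[OF h(1)] show "g \<in> Hle m"
    by (simp add: g Hle_def)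
qed

lemma Aut0_image_Hsp: "\<phi> \<in> Aut0 q \<Longrightarrow> f \<in> Hsp \<Longrightarrow> \<phi> f \<in> Hsp"
  unfolding Aut0_def using bij_betwE by blast

lemma Aut0_bas_in_Hle:
  fixes q :: "'k::field"
  assumes no_root: "\<forall>n::nat. n > 0 \<longrightarrow> q ^ n \<noteq> 1" and \<phi>: "\<phi> \<in> Aut0 q"
  shows "\<phi> (bas a) \<in> Hle (snd a)"
proof (induction "snd a" arbitrary: a rule: less_induct)
  case less
  have in_Hsp: "\<phi> (bas a) \<in> Hsp"
    using Aut0_image_Hsp[OF \<phi> bas_in_Hsp] .
  have "Delta q (\<phi> (bas a)) = tmap \<phi> (Delta q (bas a))"
    using \<phi> bas_in_Hsp unfolding Aut0_def by blast
  then have Delta_\<phi>: "Delta q (\<phi> (bas a)) = tmap \<phi> (DeltaB q a)"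
    by (simp add: Delta_bas)
  show ?case
  proof (cases "snd a = 0")
    case True
    then have "DeltaB q a = bas (a, a)"
      using DeltaB_0[of q "fst a"] by (metis prod.collapse)
    then have "\<forall>c. Delta q (\<phi> (bas a)) c = \<phi> (bas a) (fst c) * \<phi> (bas a) (snd c)"
      by (simp add: Delta_\<phi> tmap_def)
    with in_Hsp True show ?thesis
      by (simp add: grouplike_in_Hle_0)
  next
    case False
    have "\<forall>p\<in>supp (DeltaB q a). ydegT p = snd a"
      by (simp add: supp_def DeltaB_neq_0_imp)
    then have "Tlow (snd a) (Delta q (\<phi> (bas a)))"
      unfolding Delta_\<phi> using False less by (intro Tlow_tmap) auto
    then show ?thesis
      using Hle_if_Delta_Tlow in_Hsp no_root by blast
  qed
qed

theorem lemma2p7: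
  fixes q :: "'k::field" and \<phi> :: "(int \<times> nat \<Rightarrow> 'k) \<Rightarrow> (int \<times> nat \<Rightarrow> 'k)"
  assumes "q \<noteq> 0"
    and "\<forall>n::nat. n > 0 \<longrightarrow> q ^ n \<noteq> 1"
    and "\<phi> \<in> Aut0 q"
  shows "\<forall>m. \<phi> ` Hdeg m \<subseteq> Hle m"
proof
  fix m
  from assms(3) have "k_linear_on \<phi>"
    by (simp add: Aut0_def)
  moreover have "\<phi> (bas a) \<in> Hle m" if "snd a = m" for a
    using Aut0_bas_in_Hle[OF assms(2,3), of a] that by simp
  ultimately show "\<phi> ` Hdeg m \<subseteq> Hle m"
    using Aut0_image_Hsp[OF assms(3)] k_linear_on_image_Hdeg by blast
qed

end
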